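(* Let $\ell>0$, $r>0$, $\lambda>0$, and let $G$ be a probability distribution on $[0,\infty)$ with finite mean. The greedy polling population process $W$ (described in the context) is $\phi$-irreducible and strongly aperiodic, where $\phi$ is the Dirac measure on $M_+(S)$ assigning unit mass to the zero counting measure. Moreover, for every integer $n\ge 0$, the level set $C_n=\{\zeta\in M_+(S):\|\zeta\|\le n\}$ is small for $W$.
   Context: $S$ is the circle of circumference $\ell$ with shortest-arc distance $d$ and uniform probability distribution $m$; $B_\rho(x)=\{y: d(x,y)<\rho\}$. $M_+(S)$ is the set of finite counting measures on $S$ with the sigma-algebra generated by $\zeta\mapsto\zeta(B)$; $\|\zeta\|=\zeta(S)$. For $x\in\zeta$ (i.e. $\zeta(\{x\})>0$), $\Gamma_\zeta(x)=\{y: d(x,y)<d(x',y)\ \forall x'\in\zeta,\ x'\ne x\}$. $W$ is the Markov chain on $M_+(S)$ with the following transition from $W_t=\zeta$: add $N$ customers at i.i.d. $m$-distributed locations, $P(N=n)=\int e^{-\lambda s}\frac{(\lambda s)^n}{n!}G(ds)$, giving $\zeta'$; then choose $U$ uniform on $S$; if $\zeta'(B_r(U))=0$ nothing changes, otherwise one customer at the atom of $\zeta'$ nearest to $U$ is removed (equivalently, for each $x\in\zeta'$ one customer at $x$ is removed with probability $m(B_r(x)\cap\Gamma_{\zeta'}(x))$). Irreducibility, strong aperiodicity and small sets are in the sense of Meyn and Tweedie: a set $C$ is small if there exist $k\ge1$ and a nonzero measure $\nu$ with $P^k(\zeta,B)\ge\nu(B)$ for all $\zeta\in C$ and measurable $B$.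 *)

theory Defs
  imports "HOL-Probability.Probability" "HOL-Library.Multiset"
begin

primrec kstep :: "'a measure \<Rightarrow> ('a \<Rightarrow> 'a measure) \<Rightarrow> nat \<Rightarrow> 'a \<Rightarrow> 'a measure" where
  "kstep M P 0 x = return M x"
| "kstep M P (Suc k) x = bind (kstep M P k x) P"

definition phi_irreducible :: "'a measure \<Rightarrow> ('a \<Rightarrow> 'a measure) \<Rightarrow> 'a measure \<Rightarrow> bool" where
  "phi_irreducible M P \<phi> \<longleftrightarrow>
     (\<forall>x\<in>space M. \<forall>B\<in>sets M. emeasure \<phi> B > 0 \<longrightarrow>
        (\<exists>n\<ge>1. emeasure (kstep M P n x) B > 0))"

definition small_set :: "'a measure \<Rightarrow> ('a \<Rightarrow> 'a measure) \<Rightarrow> 'a set \<Rightarrow> bool" where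
  "small_set M P C \<longleftrightarrow> C \<in> sets M \<and>
     (\<exists>k\<ge>1. \<exists>\<nu>. sets \<nu> = sets M \<and> emeasure \<nu> (space M) > 0 \<and>
        (\<forall>x\<in>C. \<forall>B\<in>sets M. emeasure \<nu> B \<le> emeasure (kstep M P k x) B))"

definition strongly_aperiodic :: "'a measure \<Rightarrow> ('a \<Rightarrow> 'a measure) \<Rightarrow> bool" where
  "strongly_aperiodic M P \<longleftrightarrow>
     (\<exists>C\<in>sets M. \<exists>\<nu>. sets \<nu> = sets M \<and> emeasure \<nu> C > 0 \<and>
        (\<forall>x\<in>C. \<forall>B\<in>sets M. emeasure \<nu> B \<le> emeasure (P x) B))"

text \<open>The circle of circumference L is represented by the points of [0,L) with the
  shortest-arc distance; m is the uniform probability distribution on it.\<close>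

definition circ_dist :: "real \<Rightarrow> real \<Rightarrow> real \<Rightarrow> real" where
  "circ_dist L x y = min \<bar>x - y\<bar> (L - \<bar>x - y\<bar>)"

definition circ_unif :: "real \<Rightarrow> real measure" where
  "circ_unif L = uniform_measure lborel {0..<L}"

text \<open>Finite counting measures on S are finite multisets of points of S;
  \<zeta>(B) is the number of points (with multiplicity) of \<zeta> in B.\<close>

definition cnt :: "real set \<Rightarrow> real multiset \<Rightarrow> nat" where
  "cnt B \<zeta> = size (filter_mset (\<lambda>x. x \<in> B) \<zeta>)"

definition cstates :: "real \<Rightarrow> real multiset set" where
  "cstates L = {\<zeta>. set_mset \<zeta> \<subseteq> {0..<L}}"

definition Mplus :: "real \<Rightarrow> real multiset measure" where
  "Mplus L = sigma (cstates L)
     {{\<zeta>\<in>cstates L. cnt B \<zeta> = k} | B k. B \<in> sets borel}"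

definition Gamma :: "real \<Rightarrow> real multiset \<Rightarrow> real \<Rightarrow> real set" where
  "Gamma L \<zeta> x = {y. \<forall>x'\<in>#\<zeta>. x' \<noteq> x \<longrightarrow> circ_dist L x y < circ_dist L x' y}"

text \<open>Service step with server position u: if u lies in B_r(x) \<inter> Gamma(x) for an atom x
  (necessarily unique), one customer at x is removed; otherwise nothing changes.\<close>
definition serve :: "real \<Rightarrow> real \<Rightarrow> real \<Rightarrow> real multiset \<Rightarrow> real multiset" where
  "serve L r u \<zeta> =
     (if \<exists>x\<in>#\<zeta>. circ_dist L x u < r \<and> u \<in> Gamma L \<zeta> x
      then \<zeta> - {# THE x. x \<in># \<zeta> \<and> circ_dist L x u < r \<and> u \<in> Gamma L \<zeta> x #}
      else \<zeta>)"

definition arrivals :: "real \<Rightarrow> real measure \<Rightarrow> nat measure" where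
  "arrivals lam G = density (count_space UNIV)
     (\<lambda>n. \<integral>\<^sup>+ s. ennreal (exp (- lam * s) * (lam * s) ^ n / fact n) \<partial>G)"

text \<open>One transition from \<zeta>: draw N, i.i.d. uniform locations xs 0, xs 1, ..., and the
  uniform server position U, all independent; add customers at xs 0, ..., xs (N-1), then serve.\<close>
definition polling_kernel ::
    "real \<Rightarrow> real \<Rightarrow> real \<Rightarrow> real measure \<Rightarrow> real multiset \<Rightarrow> real multiset measure" where
  "polling_kernel L r lam G \<zeta> =
     distr (arrivals lam G \<Otimes>\<^sub>M (PiM UNIV (\<lambda>_::nat. circ_unif L)) \<Otimes>\<^sub>M circ_unif L)
           (Mplus L)
           (\<lambda>(n, xs, u). serve L r u (\<zeta> + mset (map xs [0..<n])))"

end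

theory Submission
  imports Defs
begin

text \<open>From any configuration, with probability at least some c > 0 there are no arrivals and
  the server lands near a customer but away from the finitely many positions equidistant from
  two atoms, so one customer is removed.  Iterating, from a configuration with at most n
  customers the chain is empty after n + 1 steps with probability at least c^(n+1).  Hence
  c^(n+1) times the Dirac measure at the empty configuration minorizes the (n+1)-step kernel on
  the level set C_n; this gives smallness, strong aperiodicity (n = 0) and irreducibility with
  respect to that Dirac measure.\<close>

section \<open>Kernels descending uniformly to an atom\<close>

locale uniformly_descending_kernel =
  fixes M :: "'a measure" and P :: "'a \<Rightarrow> 'a measure" and h :: "'a \<Rightarrow> nat"
    and c :: ennreal and z :: 'a
  assumes kernel_measurable: "P \<in> measurable M (subprob_algebra M)"
    and sublevel_sets: "{x \<in> space M. h x \<le> k} \<in> sets M"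
    and descent_pos: "0 < c"
    and descent: "x \<in> space M \<Longrightarrow> c \<le> emeasure (P x) {y \<in> space M. h y \<le> h x - 1}"
    and bottom_in_space: "z \<in> space M"
    and bottom_level: "h z = 0"
    and bottom_unique: "x \<in> space M \<Longrightarrow> h x = 0 \<Longrightarrow> x = z"
begin

lemma descent_power_pos: "0 < c ^ k"
  using descent_pos by (induction k) (auto simp: ennreal_zero_less_mult_iff)

lemma sets_kstep: "sets (kstep M P k x) = sets M"
proof (induction k)
  case (Suc k)
  have space_K: "space (kstep M P k x) = space M" by (rule sets_eq_imp_space_eq[OF Suc])
  show ?case unfolding kstep.simps
  proof (rule sets_bind)
    show "sets (P y) = sets M" if "y \<in> space (kstep M P k x)" for y
      using that space_K by (simp add: sets_kernel[OF kernel_measurable])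
    show "space (kstep M P k x) \<noteq> {}" using space_K bottom_in_space by auto
  qed
qed simp

lemma kstep_sublevel:
  assumes "x \<in> space M"
  shows "c ^ k \<le> emeasure (kstep M P k x) {y \<in> space M. h y \<le> h x - k}"
proof (induction k)
  case 0
  show ?case using assms sublevel_sets by simp
next
  case (Suc k)
  let ?K = "kstep M P k x" and ?A = "\<lambda>k. {y \<in> space M. h y \<le> h x - k}"
  have space_K: "space ?K = space M" by (rule sets_eq_imp_space_eq[OF sets_kstep])
  have P_K: "P \<in> measurable ?K (subprob_algebra M)"
    using kernel_measurable by (simp add: measurable_cong_sets[OF sets_kstep refl])
  have "c ^ Suc k \<le> c * emeasure ?K (?A k)"
    using Suc by (simp add: mult_left_mono)
  also have "\<dots> = (\<integral>\<^sup>+ y. c * indicator (?A k) y \<partial>?K)"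
    by (rule nn_integral_cmult_indicator[symmetric]) (simp add: sets_kstep sublevel_sets)
  also have "\<dots> \<le> (\<integral>\<^sup>+ y. emeasure (P y) (?A (Suc k)) \<partial>?K)"
  proof (rule nn_integral_mono)
    fix y assume "y \<in> space ?K"
    then have y: "y \<in> space M" using space_K by simp
    show "c * indicator (?A k) y \<le> emeasure (P y) (?A (Suc k))"
    proof (cases "y \<in> ?A k")
      case True
      have "c \<le> emeasure (P y) {y' \<in> space M. h y' \<le> h y - 1}"
        using descent[OF y] .
      also have "\<dots> \<le> emeasure (P y) (?A (Suc k))"
        using True sublevel_sets sets_kernel[OF kernel_measurable y]
        by (intro emeasure_mono) auto
      finally show ?thesis using True by simp
    qed simp
  qed
  also have "\<dots> = emeasure (kstep M P (Suc k) x) (?A (Suc k))"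
    using space_K bottom_in_space unfolding kstep.simps
    by (intro emeasure_bind[symmetric, OF _ P_K sublevel_sets]) auto
  finally show ?case .
qed

lemma kstep_minorized_by_bottom:
  assumes "x \<in> space M" and "h x \<le> k" and "B \<in> sets M"
  shows "emeasure (scale_measure (c ^ k) (return M z)) B \<le> emeasure (kstep M P k x) B"
proof (cases "z \<in> B")
  case True
  have "{y \<in> space M. h y \<le> h x - k} \<subseteq> B"
    using True assms(2) bottom_unique by auto
  then have "emeasure (kstep M P k x) {y \<in> space M. h y \<le> h x - k} \<le> emeasure (kstep M P k x) B"
    using assms(3) by (intro emeasure_mono) (simp_all add: sets_kstep)
  with kstep_sublevel[OF assms(1), of k] True assms(3) show ?thesis by simp
qed (use assms(3) in simp)

lemma phi_irreducible_return_bottom: "phi_irreducible M P (return M z)"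
  unfolding phi_irreducible_def
proof (intro ballI impI)
  fix x B assume x: "x \<in> space M" and B: "B \<in> sets M" and "0 < emeasure (return M z) B"
  then have "z \<in> B" by (cases "z \<in> B") simp_all
  have "0 < c ^ Suc (h x)" by (rule descent_power_pos)
  also have "\<dots> = emeasure (scale_measure (c ^ Suc (h x)) (return M z)) B"
    using \<open>z \<in> B\<close> B by simp
  also have "\<dots> \<le> emeasure (kstep M P (Suc (h x)) x) B"
    using x B by (intro kstep_minorized_by_bottom) simp_all
  finally show "\<exists>n\<ge>1. 0 < emeasure (kstep M P n x) B" by (intro exI[of _ "Suc (h x)"]) simp
qed

lemma strongly_aperiodic: "strongly_aperiodic M P"
  unfolding strongly_aperiodic_def
proof (intro bexI exI conjI ballI)
  let ?\<nu> = "scale_measure (c ^ 1) (return M z)"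
  show "0 < emeasure ?\<nu> {x \<in> space M. h x \<le> 0}"
    using descent_pos bottom_in_space bottom_level sublevel_sets[of 0] by simp
  fix x B assume "x \<in> {x \<in> space M. h x \<le> 0}" and B: "B \<in> sets M"
  then have x: "x \<in> space M" "h x \<le> 1" by auto
  show "emeasure ?\<nu> B \<le> emeasure (P x) B"
    using kstep_minorized_by_bottom[OF x B] bind_return[OF kernel_measurable x(1)] by simp
qed (simp_all add: sublevel_sets[of 0, simplified])

lemma small_sublevel: "small_set M P {x \<in> space M. h x \<le> n}"
  unfolding small_set_def
proof (intro conjI exI[of _ "Suc n"] exI[of _ "scale_measure (c ^ Suc n) (return M z)"] ballI)
  show "0 < emeasure (scale_measure (c ^ Suc n) (return M z)) (space M)"
    using descent_power_pos[of "Suc n"] bottom_in_space by simp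
  show "emeasure (scale_measure (c ^ Suc n) (return M z)) B \<le> emeasure (kstep M P (Suc n) x) B"
    if "x \<in> {x \<in> space M. h x \<le> n}" and "B \<in> sets M" for x B
    using that by (intro kstep_minorized_by_bottom) auto
qed (simp_all add: sublevel_sets)

end

section \<open>The measurable space of counting measures\<close>

lemma Mplus_generators_Pow:
  "{{\<zeta>\<in>cstates L. cnt B \<zeta> = k} | B k. B \<in> sets borel} \<subseteq> Pow (cstates L)"
  by auto

lemma space_Mplus[simp]: "space (Mplus L) = cstates L"
  unfolding Mplus_def using Mplus_generators_Pow by (simp add: space_measure_of_conv)

lemma sets_Mplus:
  "sets (Mplus L) = sigma_sets (cstates L) {{\<zeta>\<in>cstates L. cnt B \<zeta> = k} | B k. B \<in> sets borel}"
  unfolding Mplus_def using Mplus_generators_Pow by (simp add: sets_measure_of)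

lemma empty_in_cstates: "{#} \<in> cstates L"
  unfolding cstates_def by simp

lemma measurable_cnt:
  assumes "B \<in> sets borel"
  shows "cnt B \<in> measurable (Mplus L) (count_space UNIV)"
  unfolding measurable_count_space_eq2_countable
proof safe
  fix k
  have "cnt B -` {k} \<inter> space (Mplus L) = {\<zeta>\<in>cstates L. cnt B \<zeta> = k}" by auto
  also have "\<dots> \<in> sets (Mplus L)"
    unfolding sets_Mplus using assms by (intro sigma_sets.Basic) auto
  finally show "cnt B -` {k} \<inter> space (Mplus L) \<in> sets (Mplus L)" .
qed simp

lemma cnt_UNIV: "cnt UNIV \<zeta> = size \<zeta>"
  unfolding cnt_def by simp

lemma measurable_size[measurable]: "size \<in> measurable (Mplus L) (count_space UNIV)"
  using measurable_cnt[of UNIV L] by (simp add: cnt_UNIV[abs_def])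

lemma sets_size_le: "{\<zeta> \<in> space (Mplus L). size \<zeta> \<le> k} \<in> sets (Mplus L)"
  by measurable

text \<open>The transition map lands in cstates L only almost surely, since in the product space
  the arrival locations range over all reals.  It is therefore measurable only into the
  analogous \<sigma>-algebra on all finite multisets, which contains the sets of Mplus L.\<close>

definition Mplus_univ :: "real multiset measure" where
  "Mplus_univ = sigma UNIV {{\<zeta>. cnt B \<zeta> = k} | B k. B \<in> sets borel}"

lemma cnt_eq_in_sets_Mplus_univ: "B \<in> sets borel \<Longrightarrow> {\<zeta>. cnt B \<zeta> = k} \<in> sets Mplus_univ"
  unfolding Mplus_univ_def by (simp add: sets_measure_of sigma_sets.Basic, blast)

lemma cstates_in_sets_Mplus_univ: "cstates L \<in> sets Mplus_univ"
proof -
  have "cstates L = {\<zeta>. cnt (- {0..<L}) \<zeta> = 0}"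
    unfolding cstates_def cnt_def by (auto simp: size_eq_0_iff_empty)
  then show ?thesis by (simp add: cnt_eq_in_sets_Mplus_univ)
qed

lemma sets_Mplus_subset_Mplus_univ: "A \<in> sets (Mplus L) \<Longrightarrow> A \<in> sets Mplus_univ"
  unfolding sets_Mplus
proof (induction rule: sigma_sets.induct)
  case (Basic a)
  then obtain B k where "B \<in> sets borel" "a = cstates L \<inter> {\<zeta>. cnt B \<zeta> = k}" by auto
  then show ?case using cstates_in_sets_Mplus_univ cnt_eq_in_sets_Mplus_univ by auto
next
  case (Compl a)
  then show ?case using cstates_in_sets_Mplus_univ by auto
qed auto

lemma measurable_Mplus_univI:
  assumes "\<And>B. B \<in> sets borel \<Longrightarrow> (\<lambda>x. real (cnt B (f x))) \<in> borel_measurable M"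
  shows "f \<in> measurable M Mplus_univ"
  unfolding Mplus_univ_def
proof (rule measurable_measure_of)
  fix A assume "A \<in> {{\<zeta>. cnt B \<zeta> = k} | B k. B \<in> sets borel}"
  then obtain B k where B: "B \<in> sets borel" and A: "A = {\<zeta>. cnt B \<zeta> = k}" by auto
  have "f -` A \<inter> space M = {x \<in> space M. real (cnt B (f x)) = real k}" using A by auto
  also have "\<dots> \<in> sets M" using assms[OF B] by measurable
  finally show "f -` A \<inter> space M \<in> sets M" .
qed auto

text \<open>distr does not require measurability, so the usual formula holds as soon as
  preimages of the sets of Mplus L are measurable.\<close>

lemma emeasure_distr_Mplus:
  assumes f: "f \<in> measurable M Mplus_univ" and A: "A \<in> sets (Mplus L)"
  shows "emeasure (distr M (Mplus L) f) A = emeasure M (f -` A \<inter> space M)"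
proof -
  let ?\<mu> = "\<lambda>A. emeasure M (f -` A \<inter> space M)"
  have preimage: "f -` X \<inter> space M \<in> sets M" if "X \<in> sets (Mplus L)" for X
    using measurable_sets[OF f sets_Mplus_subset_Mplus_univ[OF that]] .
  have "measure_space (space (Mplus L)) (sets (Mplus L)) ?\<mu>"
    unfolding measure_space_def
  proof (intro conjI)
    show "sigma_algebra (space (Mplus L)) (sets (Mplus L))" by (rule sets.sigma_algebra_axioms)
    show "positive (sets (Mplus L)) ?\<mu>" unfolding positive_def by simp
    show "countably_additive (sets (Mplus L)) ?\<mu>"
      unfolding countably_additive_def
    proof safe
      fix X :: "nat \<Rightarrow> _" assume X: "range X \<subseteq> sets (Mplus L)" "disjoint_family X"
      have "(\<Sum>i. ?\<mu> (X i)) = emeasure M (\<Union>i. f -` X i \<inter> space M)"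
        using X preimage by (intro suminf_emeasure) (auto simp: disjoint_family_on_def)
      also have "(\<Union>i. f -` X i \<inter> space M) = f -` (\<Union>i. X i) \<inter> space M" by auto
      finally show "(\<Sum>i. ?\<mu> (X i)) = ?\<mu> (\<Union>i. X i)" .
    qed
  qed
  then show ?thesis
    unfolding distr_def emeasure_measure_of_conv using A sets.sigma_sets_eq[of "Mplus L"] by simp
qed

definition serves :: "real \<Rightarrow> real \<Rightarrow> real \<Rightarrow> real multiset \<Rightarrow> real \<Rightarrow> bool" where
  "serves L r u \<zeta> x \<longleftrightarrow> circ_dist L x u < r \<and> u \<in> Gamma L \<zeta> x"

lemma serves_unique:
  "x \<in># \<zeta> \<Longrightarrow> y \<in># \<zeta> \<Longrightarrow> serves L r u \<zeta> x \<Longrightarrow> serves L r u \<zeta> y \<Longrightarrow> x = y"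
  unfolding serves_def Gamma_def by force

lemma serve_eq_diff:
  assumes "x \<in># \<zeta>" "serves L r u \<zeta> x"
  shows "serve L r u \<zeta> = \<zeta> - {#x#}"
proof -
  have "(THE x. x \<in># \<zeta> \<and> serves L r u \<zeta> x) = x"
    using assms serves_unique by (intro the_equality) blast+
  then show ?thesis using assms by (auto simp: serve_def serves_def)
qed

lemma serve_eq_self: "\<not> (\<exists>x\<in>#\<zeta>. serves L r u \<zeta> x) \<Longrightarrow> serve L r u \<zeta> = \<zeta>"
  unfolding serve_def serves_def by auto

lemma serve_subseteq: "serve L r u \<zeta> \<subseteq># \<zeta>"
  using serve_eq_diff serve_eq_self by (metis subset_mset.order_refl diff_subset_eq_self)

lemma cnt_diff_singleton:
  assumes "x \<in># \<zeta>"
  shows "cnt B (\<zeta> - {#x#}) = cnt B \<zeta> - (if x \<in> B then 1 else 0)"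
proof -
  obtain \<xi> where "\<zeta> = add_mset x \<xi>" using assms by (metis insert_DiffM)
  then show ?thesis by (auto simp: cnt_def)
qed

lemma cnt_pos: "y \<in># \<zeta> \<Longrightarrow> y \<in> B \<Longrightarrow> 0 < cnt B \<zeta>"
  unfolding cnt_def by (auto simp: zero_less_iff_neq_zero)

lemma cnt_serve:
  "cnt B (serve L r u \<zeta>) = cnt B \<zeta> - (if \<exists>x\<in>#\<zeta>. serves L r u \<zeta> x \<and> x \<in> B then 1 else 0)"
proof (cases "\<exists>x\<in>#\<zeta>. serves L r u \<zeta> x")
  case True
  then obtain x where x: "x \<in># \<zeta>" "serves L r u \<zeta> x" by blast
  have "(\<exists>y\<in>#\<zeta>. serves L r u \<zeta> y \<and> y \<in> B) \<longleftrightarrow> x \<in> B"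
    using x serves_unique by blast
  then show ?thesis using serve_eq_diff[OF x] cnt_diff_singleton[OF x(1)] by simp
qed (simp add: serve_eq_self)

lemma cnt_mset_map: "real (cnt B (mset (map v [0..<K]))) = (\<Sum>j<K. indicator B (v j))"
  by (induction K) (auto simp: cnt_def indicator_def)

lemma measurable_circ_dist[measurable (raw)]:
  "f \<in> borel_measurable M \<Longrightarrow> g \<in> borel_measurable M \<Longrightarrow>
    (\<lambda>x. circ_dist L (f x) (g x)) \<in> borel_measurable M"
  unfolding circ_dist_def
  by (intro borel_measurable_min borel_measurable_abs borel_measurable_diff borel_measurable_const)

text \<open>After serving a configuration of finitely many points, each count is an explicit
  Boolean combination of the distances between the points and the server.\<close>

lemma measurable_cnt_serve:
  assumes v: "\<And>j. (\<lambda>x. v x j) \<in> borel_measurable M" and u: "u \<in> borel_measurable M"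
    and B: "B \<in> sets borel"
  shows "(\<lambda>x. real (cnt B (serve L r (u x) (mset (map (v x) [0..<K]))))) \<in> borel_measurable M"
proof -
  define served where "served x \<longleftrightarrow> (\<exists>j<K. circ_dist L (v x j) (u x) < r \<and>
      (\<forall>i<K. v x i \<noteq> v x j \<longrightarrow> circ_dist L (v x j) (u x) < circ_dist L (v x i) (u x)) \<and>
      v x j \<in> B)" for x
  have eq: "real (cnt B (serve L r (u x) (mset (map (v x) [0..<K])))) =
      (\<Sum>j<K. indicator B (v x j)) - (if served x then 1 else 0)" for x
  proof -
    let ?\<zeta> = "mset (map (v x) [0..<K])"
    have served: "(\<exists>y\<in>#?\<zeta>. serves L r (u x) ?\<zeta> y \<and> y \<in> B) \<longleftrightarrow> served x"
      unfolding serves_def Gamma_def served_def by auto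
    have "served x \<Longrightarrow> 0 < cnt B ?\<zeta>"
      using cnt_pos served by blast
    with served show ?thesis
      by (auto simp: cnt_serve cnt_mset_map[symmetric] of_nat_diff)
  qed
  show ?thesis unfolding eq served_def using v u B by measurable
qed

definition nth_atom :: "real multiset \<Rightarrow> nat \<Rightarrow> real" where
  "nth_atom \<zeta> j = (if j < size \<zeta> then sorted_list_of_multiset \<zeta> ! j else 0)"

lemma length_sorted_list_of_multiset: "length (sorted_list_of_multiset \<zeta>) = size \<zeta>"
  by (metis mset_sorted_list_of_multiset size_mset)

lemma sorted_nth_le_iff:
  fixes xs :: "'a::linorder list"
  assumes xs: "sorted xs" and j: "j < length xs"
  shows "xs ! j \<le> t \<longleftrightarrow> Suc j \<le> length (filter (\<lambda>x. x \<le> t) xs)"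
  unfolding length_filter_conv_card
proof
  assume "xs ! j \<le> t"
  then have "{0..j} \<subseteq> {i. i < length xs \<and> xs ! i \<le> t}"
    using sorted_nth_mono[OF xs _ j] j by fastforce
  from card_mono[OF _ this] show "Suc j \<le> card {i. i < length xs \<and> xs ! i \<le> t}" by simp
next
  assume card: "Suc j \<le> card {i. i < length xs \<and> xs ! i \<le> t}"
  show "xs ! j \<le> t"
  proof (rule ccontr)
    assume gt: "\<not> xs ! j \<le> t"
    have "{i. i < length xs \<and> xs ! i \<le> t} \<subseteq> {..<j}"
    proof
      fix i assume i: "i \<in> {i. i < length xs \<and> xs ! i \<le> t}"
      show "i \<in> {..<j}"
      proof (rule ccontr)
        assume "i \<notin> {..<j}"
        then have "xs ! j \<le> xs ! i" using sorted_nth_mono[OF xs, of j i] i by simp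
        then show False using i gt order_trans by blast
      qed
    qed
    from card_mono[OF _ this] card show False by simp
  qed
qed

lemma cnt_eq_length_filter: "cnt B \<zeta> = length (filter (\<lambda>x. x \<in> B) (sorted_list_of_multiset \<zeta>))"
  unfolding cnt_def by (metis mset_filter mset_sorted_list_of_multiset size_mset)

lemma nth_atom_le_iff:
  "nth_atom \<zeta> j \<le> t \<longleftrightarrow>
    (size \<zeta> \<le> j \<and> 0 \<le> t) \<or> (j < size \<zeta> \<and> real (Suc j) \<le> real (cnt {..t} \<zeta>))"
proof -
  have "j < size \<zeta> \<Longrightarrow> sorted_list_of_multiset \<zeta> ! j \<le> t \<longleftrightarrow> Suc j \<le> cnt {..t} \<zeta>"
    using sorted_nth_le_iff[of "sorted_list_of_multiset \<zeta>" j t]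
    by (simp add: length_sorted_list_of_multiset cnt_eq_length_filter)
  then show ?thesis unfolding nth_atom_def by auto
qed

lemma measurable_nth_atom[measurable]: "(\<lambda>\<zeta>. nth_atom \<zeta> j) \<in> borel_measurable (Mplus L)"
  unfolding borel_measurable_iff_le
proof
  fix t
  have "(\<lambda>\<zeta>. real (cnt {..t} \<zeta>)) \<in> borel_measurable (Mplus L)"
    using measurable_cnt[of "{..t}" L] by measurable
  then have "{\<zeta> \<in> space (Mplus L). (size \<zeta> \<le> j \<and> 0 \<le> t) \<or>
      (j < size \<zeta> \<and> real (Suc j) \<le> real (cnt {..t} \<zeta>))} \<in> sets (Mplus L)"
    by measurable
  then show "{\<zeta> \<in> space (Mplus L). nth_atom \<zeta> j \<le> t} \<in> sets (Mplus L)"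
    unfolding nth_atom_le_iff .
qed

lemma mset_map_nth_atom: "mset (map (nth_atom \<zeta>) [0..<size \<zeta>]) = \<zeta>"
proof -
  have "map (nth_atom \<zeta>) [0..<size \<zeta>] = sorted_list_of_multiset \<zeta>"
    by (rule nth_equalityI) (auto simp: nth_atom_def length_sorted_list_of_multiset)
  then show ?thesis by simp
qed

definition seq_prepend :: "nat \<Rightarrow> (nat \<Rightarrow> 'a) \<Rightarrow> (nat \<Rightarrow> 'a) \<Rightarrow> nat \<Rightarrow> 'a" where
  "seq_prepend m a xs j = (if j < m then a j else xs (j - m))"

lemma map_seq_prepend: "map (seq_prepend m a xs) [0..<m + n] = map a [0..<m] @ map xs [0..<n]"
proof -
  have "map (seq_prepend m a xs) [0..<m] = map a [0..<m]"
    by (intro map_cong) (auto simp: seq_prepend_def)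
  moreover have "map (seq_prepend m a xs) [m..<m + n] = map xs [0..<n]"
    by (induction n) (auto simp: seq_prepend_def)
  ultimately show ?thesis using upt_add_eq_append[of 0 m n] by simp
qed

lemma plus_mset_map_eq:
  "\<zeta> + mset (map xs [0..<n]) = mset (map (seq_prepend (size \<zeta>) (nth_atom \<zeta>) xs) [0..<size \<zeta> + n])"
  by (simp only: map_seq_prepend mset_append mset_map_nth_atom)

section \<open>Measurability of the polling kernel\<close>

abbreviation noise :: "real \<Rightarrow> real \<Rightarrow> real measure \<Rightarrow> (nat \<times> (nat \<Rightarrow> real) \<times> real) measure" where
  "noise L lam G \<equiv> arrivals lam G \<Otimes>\<^sub>M (PiM UNIV (\<lambda>_::nat. circ_unif L)) \<Otimes>\<^sub>M circ_unif L"

definition transition ::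
    "real \<Rightarrow> real \<Rightarrow> real multiset \<Rightarrow> nat \<times> (nat \<Rightarrow> real) \<times> real \<Rightarrow> real multiset" where
  "transition L r \<zeta> = (\<lambda>(n, xs, u). serve L r u (\<zeta> + mset (map xs [0..<n])))"

lemma polling_kernel_eq_distr:
  "polling_kernel L r lam G \<zeta> = distr (noise L lam G) (Mplus L) (transition L r \<zeta>)"
  unfolding polling_kernel_def transition_def ..

lemma sets_arrivals[measurable_cong]: "sets (arrivals lam G) = sets (count_space UNIV)"
  unfolding arrivals_def by simp

lemma sets_circ_unif[measurable_cong]: "sets (circ_unif L) = sets borel"
  unfolding circ_unif_def by simp

text \<open>Listing the atoms of \<zeta> first reduces to finitely many points, each a measurable function of
  (\<zeta>, \<omega>); the sizes of \<zeta> and of the arrival batch are eliminated by countable case distinction.\<close>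

lemma measurable_transition_joint:
  "(\<lambda>x. transition L r (fst x) (snd x)) \<in> measurable (Mplus L \<Otimes>\<^sub>M noise L lam G) Mplus_univ"
proof (rule measurable_Mplus_univI)
  fix B :: "real set" assume B: "B \<in> sets borel"
  define \<Phi> where "\<Phi> m n x = real (cnt B (serve L r (snd (snd (snd x)))
        (mset (map (seq_prepend m (nth_atom (fst x)) (fst (snd (snd x)))) [0..<m + n]))))"
    for m n and x :: "real multiset \<times> nat \<times> (nat \<Rightarrow> real) \<times> real"
  have "(\<lambda>x. \<Phi> m n x) \<in> borel_measurable (Mplus L \<Otimes>\<^sub>M noise L lam G)" for m n
  proof -
    have "(\<lambda>x. seq_prepend m (nth_atom (fst x)) (fst (snd (snd x))) j)
        \<in> borel_measurable (Mplus L \<Otimes>\<^sub>M noise L lam G)" for j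
      unfolding seq_prepend_def by measurable
    moreover have "(\<lambda>x. snd (snd (snd x))) \<in> borel_measurable (Mplus L \<Otimes>\<^sub>M noise L lam G)"
      by measurable
    ultimately show ?thesis
      unfolding \<Phi>_def using B by (rule measurable_cnt_serve)
  qed
  then have "(\<lambda>x. \<Phi> m (fst (snd x)) x) \<in> borel_measurable (Mplus L \<Otimes>\<^sub>M noise L lam G)" for m
    by (rule measurable_compose_countable[where f="\<lambda>n x. \<Phi> m n x"]) measurable
  then have "(\<lambda>x. \<Phi> (size (fst x)) (fst (snd x)) x) \<in> borel_measurable (Mplus L \<Otimes>\<^sub>M noise L lam G)"
    by (rule measurable_compose_countable[where f="\<lambda>m x. \<Phi> m (fst (snd x)) x"]) measurable
  moreover have "\<Phi> (size (fst x)) (fst (snd x)) x = real (cnt B (transition L r (fst x) (snd x)))"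
    for x
  proof -
    obtain \<zeta> n xs u where x: "x = (\<zeta>, n, xs, u)" by (cases x) auto
    show ?thesis
      unfolding x \<Phi>_def transition_def fst_conv snd_conv prod.case plus_mset_map_eq by (rule refl)
  qed
  ultimately show "(\<lambda>x. real (cnt B (transition L r (fst x) (snd x))))
      \<in> borel_measurable (Mplus L \<Otimes>\<^sub>M noise L lam G)"
    by (rule measurable_cong[THEN iffD1, rotated])
qed

lemma measurable_transition:
  assumes "\<zeta> \<in> cstates L"
  shows "transition L r \<zeta> \<in> measurable (noise L lam G) Mplus_univ"
proof -
  have "(\<lambda>\<omega>. (\<zeta>, \<omega>)) \<in> measurable (noise L lam G) (Mplus L \<Otimes>\<^sub>M noise L lam G)"
    using assms by (intro measurable_Pair measurable_const measurable_ident_sets) auto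
  from measurable_compose[OF this measurable_transition_joint] show ?thesis by simp
qed

lemma emeasure_polling_kernel:
  assumes "\<zeta> \<in> cstates L" and "A \<in> sets (Mplus L)"
  shows "emeasure (polling_kernel L r lam G \<zeta>) A =
    emeasure (noise L lam G) (transition L r \<zeta> -` A \<inter> space (noise L lam G))"
  unfolding polling_kernel_eq_distr using measurable_transition[OF assms(1)] assms(2)
  by (rule emeasure_distr_Mplus)

lemma sets_polling_kernel[simp]: "sets (polling_kernel L r lam G \<zeta>) = sets (Mplus L)"
  unfolding polling_kernel_def by simp

lemma measurable_polling_kernel:
  assumes "prob_space (noise L lam G)"
  shows "polling_kernel L r lam G \<in> measurable (Mplus L) (subprob_algebra (Mplus L))"
proof (rule measurable_subprob_algebra)
  interpret prob_space "noise L lam G" by (rule assms)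
  fix \<zeta> assume \<zeta>: "\<zeta> \<in> space (Mplus L)"
  have space_kernel: "space (polling_kernel L r lam G \<zeta>) = cstates L"
    using sets_eq_imp_space_eq[OF sets_polling_kernel] by simp
  show "subprob_space (polling_kernel L r lam G \<zeta>)"
  proof
    show "emeasure (polling_kernel L r lam G \<zeta>) (space (polling_kernel L r lam G \<zeta>)) \<le> 1"
      using \<zeta> sets.top[of "Mplus L"] by (simp add: space_kernel emeasure_polling_kernel emeasure_le_1)
    show "space (polling_kernel L r lam G \<zeta>) \<noteq> {}"
      using space_kernel empty_in_cstates by auto
  qed
next
  interpret prob_space "noise L lam G" by (rule assms)
  fix A assume A: "A \<in> sets (Mplus L)"
  let ?Q = "(\<lambda>x. transition L r (fst x) (snd x)) -` A \<inter> space (Mplus L \<Otimes>\<^sub>M noise L lam G)"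
  have "?Q \<in> sets (Mplus L \<Otimes>\<^sub>M noise L lam G)"
    by (rule measurable_sets[OF measurable_transition_joint sets_Mplus_subset_Mplus_univ[OF A]])
  then have "(\<lambda>\<zeta>. emeasure (noise L lam G) (Pair \<zeta> -` ?Q)) \<in> borel_measurable (Mplus L)"
    by (rule measurable_emeasure_Pair)
  moreover have "emeasure (noise L lam G) (Pair \<zeta> -` ?Q) = emeasure (polling_kernel L r lam G \<zeta>) A"
    if "\<zeta> \<in> space (Mplus L)" for \<zeta>
  proof -
    have "Pair \<zeta> -` ?Q = transition L r \<zeta> -` A \<inter> space (noise L lam G)"
      using that by (auto simp: space_pair_measure)
    then show ?thesis using emeasure_polling_kernel[of \<zeta> L A] that A by simp
  qed
  ultimately show "(\<lambda>\<zeta>. emeasure (polling_kernel L r lam G \<zeta>) A) \<in> borel_measurable (Mplus L)"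
    by (rule measurable_cong[THEN iffD1, rotated]) simp
qed simp

definition no_arrival_prob :: "real \<Rightarrow> real measure \<Rightarrow> ennreal" where
  "no_arrival_prob lam G = (\<integral>\<^sup>+ s. ennreal (exp (- lam * s)) \<partial>G)"

lemma borel_measurable_poisson_weight:
  assumes "sets G = sets borel"
  shows "(\<lambda>s. ennreal (exp (- lam * s) * (lam * s) ^ n / fact n)) \<in> borel_measurable G"
proof -
  have sets: "borel_measurable G = borel_measurable borel"
    by (rule measurable_cong_sets) (simp_all add: assms)
  show ?thesis unfolding sets by measurable
qed

lemma prob_space_arrivals:
  assumes lam: "lam > 0" and G: "prob_space G" "sets G = sets borel" "emeasure G {0..} = 1"
  shows "prob_space (arrivals lam G)"
proof (rule prob_spaceI)
  interpret G: prob_space G by (rule G(1))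
  have "{0..} \<in> G.events" "G.prob {0..} = 1"
    using G(2,3) by (simp_all add: G.emeasure_eq_measure)
  then have nonneg: "AE s in G. s \<in> {0..}"
    using G.AE_in_set_eq_1 by blast
  have poisson_sum: "(\<Sum>n. ennreal (exp (- lam * s) * (lam * s) ^ n / fact n)) = 1" if "s \<ge> 0" for s
  proof -
    have "(\<lambda>n. exp (- lam * s) * ((lam * s) ^ n / fact n)) sums (exp (- lam * s) * exp (lam * s))"
      using exp_converges[of "lam * s"]
      by (intro sums_mult) (simp add: divide_inverse scaleR_conv_of_real mult.commute)
    then have "(\<lambda>n. exp (- lam * s) * (lam * s) ^ n / fact n) sums 1"
      by (simp add: exp_minus field_simps)
    then show ?thesis
      using that lam by (subst suminf_ennreal2) (auto simp: sums_iff)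
  qed
  have "emeasure (arrivals lam G) (space (arrivals lam G)) =
      (\<Sum>n. \<integral>\<^sup>+ s. ennreal (exp (- lam * s) * (lam * s) ^ n / fact n) \<partial>G)"
    unfolding arrivals_def by (simp add: emeasure_density nn_integral_count_space_nat)
  also have "\<dots> = (\<integral>\<^sup>+ s. (\<Sum>n. ennreal (exp (- lam * s) * (lam * s) ^ n / fact n)) \<partial>G)"
    by (rule nn_integral_suminf[symmetric]) (rule borel_measurable_poisson_weight[OF G(2)])
  also have "\<dots> = (\<integral>\<^sup>+ s. 1 \<partial>G)"
  proof (rule nn_integral_cong_AE)
    show "AE s in G. (\<Sum>n. ennreal (exp (- lam * s) * (lam * s) ^ n / fact n)) = 1"
      using nonneg by (rule AE_mp) (rule AE_I2, rule impI, rule poisson_sum, simp)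
  qed
  also have "\<dots> = 1" by (simp add: G.emeasure_space_1)
  finally show "emeasure (arrivals lam G) (space (arrivals lam G)) = 1" .
qed

lemma emeasure_arrivals_0: "emeasure (arrivals lam G) {0} = no_arrival_prob lam G"
proof -
  have "emeasure (arrivals lam G) {0} =
     (\<integral>\<^sup>+ n. (\<integral>\<^sup>+ s. ennreal (exp (- lam * s) * (lam * s) ^ n / fact n) \<partial>G) * indicator {0} n
       \<partial>count_space UNIV)"
    unfolding arrivals_def by (simp add: emeasure_density)
  also have "\<dots> = no_arrival_prob lam G"
    by (subst nn_integral_indicator_singleton) (simp_all add: no_arrival_prob_def)
  finally show ?thesis .
qed

lemma no_arrival_prob_pos:
  assumes G: "prob_space G" "sets G = sets borel"
  shows "0 < no_arrival_prob lam G"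
proof -
  interpret G: prob_space G by (rule G(1))
  have "(\<lambda>s. ennreal (exp (- lam * s))) \<in> borel_measurable G"
    using borel_measurable_poisson_weight[OF G(2), of lam 0] by simp
  moreover have "\<not> (AE s in G. ennreal (exp (- lam * s)) = 0)"
    using G.AE_False by simp
  ultimately have "no_arrival_prob lam G \<noteq> 0"
    unfolding no_arrival_prob_def using nn_integral_0_iff_AE by blast
  then show ?thesis using zero_less_iff_neq_zero by blast
qed

lemma prob_space_circ_unif: "L > 0 \<Longrightarrow> prob_space (circ_unif L)"
  unfolding circ_unif_def by (rule prob_space_uniform_measure) auto

lemma prob_space_PiM_circ_unif: "L > 0 \<Longrightarrow> prob_space (PiM UNIV (\<lambda>_::nat. circ_unif L))"
  by (intro prob_space_PiM prob_space_circ_unif)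

lemma prob_space_noise:
  assumes "L > 0" "lam > 0" "prob_space G" "sets G = sets borel" "emeasure G {0..} = 1"
  shows "prob_space (noise L lam G)"
  using assms by (intro prob_space_pair prob_space_arrivals prob_space_PiM_circ_unif prob_space_circ_unif)

lemma emeasure_circ_unif_subset_Ico:
  assumes "0 < L" "0 \<le> a" "a \<le> b" "b \<le> L" "U \<in> sets borel" "U \<subseteq> {a..<b}"
    "emeasure lborel U = emeasure lborel {a..<b}"
  shows "emeasure (circ_unif L) U = ennreal ((b - a) / L)"
proof -
  have "{0..<L} \<inter> U = U" using assms by auto
  then show ?thesis using assms unfolding circ_unif_def by (simp add: divide_ennreal)
qed

lemma emeasure_noise_no_arrivals:
  assumes L: "L > 0" and U: "U \<in> sets borel"
  shows "emeasure (noise L lam G) ({0} \<times> space (PiM UNIV (\<lambda>_::nat. circ_unif L)) \<times> U) =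
      no_arrival_prob lam G * emeasure (circ_unif L) U"
proof -
  interpret unif: prob_space "circ_unif L" using L by (rule prob_space_circ_unif)
  interpret PiM_unif: prob_space "PiM UNIV (\<lambda>_::nat. circ_unif L)"
    using L by (rule prob_space_PiM_circ_unif)
  interpret pair: prob_space "PiM UNIV (\<lambda>_::nat. circ_unif L) \<Otimes>\<^sub>M circ_unif L"
    by (intro prob_space_pair unif.prob_space_axioms PiM_unif.prob_space_axioms)
  have "emeasure (PiM UNIV (\<lambda>_::nat. circ_unif L) \<Otimes>\<^sub>M circ_unif L)
      (space (PiM UNIV (\<lambda>_::nat. circ_unif L)) \<times> U) = emeasure (circ_unif L) U"
    using U by (subst unif.emeasure_pair_measure_Times) (auto simp: PiM_unif.emeasure_space_1)
  then show ?thesis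
    using U by (subst pair.emeasure_pair_measure_Times) (auto simp: emeasure_arrivals_0)
qed

section \<open>A customer is served with probability bounded away from zero\<close>

lemma circ_dist_eq_imp:
  assumes "x \<in> {0..<L}" "x' \<in> {0..<L}" "x \<noteq> x'" "circ_dist L x u = circ_dist L x' u"
  shows "2 * u = x + x' \<or> 2 * u = x + x' + L \<or> 2 * u = x + x' - L"
  using assms unfolding circ_dist_def min_def by (auto simp: abs_if split: if_splits)

text \<open>Server positions equidistant from two atoms of \<zeta>, where the nearest atom may be ambiguous.\<close>

definition tie_points :: "real \<Rightarrow> real multiset \<Rightarrow> real set" where
  "tie_points L \<zeta> = (\<Union>(x, x') \<in> set_mset \<zeta> \<times> set_mset \<zeta>. {(x + x') / 2, (x + x' + L) / 2, (x + x' - L) / 2})"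

lemma finite_tie_points: "finite (tie_points L \<zeta>)"
  unfolding tie_points_def by auto

lemma size_serve_near_atom:
  assumes \<zeta>: "\<zeta> \<in> cstates L" and x0: "x0 \<in># \<zeta>" and near: "circ_dist L x0 u < r"
    and no_tie: "u \<notin> tie_points L \<zeta>"
  shows "size (serve L r u \<zeta>) = size \<zeta> - 1"
proof -
  let ?d = "\<lambda>y. circ_dist L y u"
  have fin: "finite (?d ` set_mset \<zeta>)" and ne: "?d ` set_mset \<zeta> \<noteq> {}" using x0 by auto
  obtain x where x: "x \<in># \<zeta>" "?d x = Min (?d ` set_mset \<zeta>)" using Min_in[OF fin ne] by auto
  have nearest: "?d x \<le> ?d y" if "y \<in># \<zeta>" for y using Min_le[OF fin] that x(2) by auto
  have "serves L r u \<zeta> x"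
    unfolding serves_def Gamma_def
  proof (intro conjI CollectI ballI impI)
    show "?d x < r" using nearest[OF x0] near by simp
    fix x' assume x': "x' \<in># \<zeta>" "x' \<noteq> x"
    have "x \<in> {0..<L}" "x' \<in> {0..<L}" using \<zeta> x x' unfolding cstates_def by auto
    then have "?d x \<noteq> ?d x'"
      using circ_dist_eq_imp[of x L x' u] x' x no_tie unfolding tie_points_def by force
    then show "?d x < ?d x'" using nearest[OF x'(1)] by simp
  qed
  then show ?thesis using serve_eq_diff[OF x(1)] x(1) by (simp add: size_Diff_singleton)
qed

lemma serve_in_cstates: "\<zeta> \<in> cstates L \<Longrightarrow> serve L r u \<zeta> \<in> cstates L"
  using serve_subseteq[of L r u \<zeta>] unfolding cstates_def by (auto dest: mset_subset_eqD)

text \<open>Half an arc of length min r L next to x0, inside [0, L) and with the finitely many ties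
  removed: a server there is within distance r of x0.\<close>

lemma near_server_positions:
  assumes L: "L > 0" and r: "r > 0" and x0: "x0 \<in> {0..<L}" and T: "finite T"
  obtains U where "U \<in> sets borel" "U \<inter> T = {}" "\<And>u. u \<in> U \<Longrightarrow> circ_dist L x0 u < r"
    "emeasure (circ_unif L) U = ennreal (min r L / 2 / L)"
proof
  define \<epsilon> where "\<epsilon> = min r L / 2"
  have \<epsilon>: "\<epsilon> > 0" "2 * \<epsilon> \<le> L" "2 * \<epsilon> \<le> r" using L r by (auto simp: \<epsilon>_def)
  define a where "a = min x0 (L - \<epsilon>)"
  have a: "0 \<le> a" "a + \<epsilon> \<le> L" using x0 \<epsilon> by (auto simp: a_def)
  define U where "U = {a..<a + \<epsilon>} - T"
  have null: "T \<in> null_sets lborel" using T by (rule finite_imp_null_set_lborel)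
  show U: "U \<in> sets borel" unfolding U_def using null by (intro sets.Diff) auto
  show "U \<inter> T = {}" unfolding U_def by auto
  show "circ_dist L x0 u < r" if "u \<in> U" for u
  proof -
    have "\<bar>x0 - u\<bar> < \<epsilon>" using that x0 \<epsilon> by (auto simp: U_def a_def min_def split: if_splits)
    moreover have "circ_dist L x0 u \<le> \<bar>x0 - u\<bar>" unfolding circ_dist_def by simp
    ultimately show ?thesis using \<epsilon> by linarith
  qed
  have "emeasure lborel U = emeasure lborel {a..<a + \<epsilon>}"
    unfolding U_def using null by (rule emeasure_Diff_null_set) simp
  then show "emeasure (circ_unif L) U = ennreal (min r L / 2 / L)"
    using emeasure_circ_unif_subset_Ico[OF L a(1) _ a(2) U] \<epsilon> by (auto simp: U_def \<epsilon>_def)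
qed

definition descent_prob :: "real \<Rightarrow> real \<Rightarrow> real \<Rightarrow> real measure \<Rightarrow> ennreal" where
  "descent_prob L r lam G = no_arrival_prob lam G * ennreal (min r L / 2 / L)"

lemma descent_prob_pos:
  assumes "L > 0" "r > 0" "prob_space G" "sets G = sets borel"
  shows "0 < descent_prob L r lam G"
  using no_arrival_prob_pos[OF assms(3,4), of lam] assms(1,2)
  by (simp add: descent_prob_def ennreal_zero_less_mult_iff)

text \<open>With no arrivals and the server near an atom but off the ties, a customer is removed.\<close>

lemma emeasure_polling_kernel_size_decrease:
  assumes L: "L > 0" and r: "r > 0" and \<zeta>: "\<zeta> \<in> cstates L"
  shows "descent_prob L r lam G
    \<le> emeasure (polling_kernel L r lam G \<zeta>) {\<zeta>' \<in> space (Mplus L). size \<zeta>' \<le> size \<zeta> - 1}"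
proof -
  define x0 where "x0 = (if \<zeta> = {#} then 0 else (SOME x. x \<in># \<zeta>))"
  have x0: "\<zeta> \<noteq> {#} \<Longrightarrow> x0 \<in># \<zeta>" unfolding x0_def by (metis multiset_nonemptyE someI)
  have "x0 \<in> {0..<L}"
    using x0 \<zeta> L unfolding cstates_def by (cases "\<zeta> = {#}") (auto simp: x0_def)
  then obtain U where U: "U \<in> sets borel" "U \<inter> tie_points L \<zeta> = {}"
    and near: "\<And>u. u \<in> U \<Longrightarrow> circ_dist L x0 u < r"
    and mU: "emeasure (circ_unif L) U = ennreal (min r L / 2 / L)"
    using near_server_positions[OF L r _ finite_tie_points] by metis
  let ?E = "{0::nat} \<times> space (PiM UNIV (\<lambda>_::nat. circ_unif L)) \<times> U"
  let ?A = "{\<zeta>' \<in> space (Mplus L). size \<zeta>' \<le> size \<zeta> - 1}"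
  have "?E \<subseteq> transition L r \<zeta> -` ?A \<inter> space (noise L lam G)"
  proof safe
    fix xs u assume xs: "xs \<in> space (PiM UNIV (\<lambda>_::nat. circ_unif L))" and u: "u \<in> U"
    have "size (serve L r u \<zeta>) \<le> size \<zeta> - 1"
    proof (cases "\<zeta> = {#}")
      case False
      have "u \<notin> tie_points L \<zeta>" using u U(2) by blast
      then show ?thesis using size_serve_near_atom[OF \<zeta> x0[OF False] near[OF u]] by simp
    qed (simp add: serve_eq_self)
    then show "(0, xs, u) \<in> transition L r \<zeta> -` ?A"
      using serve_in_cstates[OF \<zeta>] by (simp add: transition_def)
    show "(0, xs, u) \<in> space (noise L lam G)"
      using xs by (simp add: space_pair_measure arrivals_def circ_unif_def)
  qed
  then have "emeasure (noise L lam G) ?E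
      \<le> emeasure (noise L lam G) (transition L r \<zeta> -` ?A \<inter> space (noise L lam G))"
    by (rule emeasure_mono) (rule measurable_sets[OF measurable_transition[OF \<zeta>]
        sets_Mplus_subset_Mplus_univ[OF sets_size_le]])
  also have "\<dots> = emeasure (polling_kernel L r lam G \<zeta>) ?A"
    using emeasure_polling_kernel[OF \<zeta> sets_size_le] by simp
  finally show ?thesis
    using emeasure_noise_no_arrivals[OF L U(1), of lam G] mU by (simp add: descent_prob_def)
qed

lemma polling_kernel_uniformly_descending:
  assumes "L > 0" and "r > 0" and "lam > 0"
    and "prob_space G" and "sets G = sets borel" and "emeasure G {0..} = 1"
  shows "uniformly_descending_kernel (Mplus L) (polling_kernel L r lam G) size
    (descent_prob L r lam G) {#}"
proof
  show "polling_kernel L r lam G \<in> Mplus L \<rightarrow>\<^sub>M subprob_algebra (Mplus L)"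
    using assms by (intro measurable_polling_kernel prob_space_noise)
  show "0 < descent_prob L r lam G"
    using assms by (intro descent_prob_pos)
  show "descent_prob L r lam G \<le>
      emeasure (polling_kernel L r lam G \<zeta>) {\<zeta>' \<in> space (Mplus L). size \<zeta>' \<le> size \<zeta> - 1}"
    if "\<zeta> \<in> space (Mplus L)" for \<zeta>
    using assms that by (intro emeasure_polling_kernel_size_decrease) simp_all
qed (use sets_size_le empty_in_cstates in auto)

theorem lemma1:
  fixes L r lam :: real and G :: "real measure"
  assumes "L > 0" and "r > 0" and "lam > 0"
    and "prob_space G" and "sets G = sets borel" and "emeasure G {0..} = 1"
    and "integrable G (\<lambda>s. s)"
  shows "phi_irreducible (Mplus L) (polling_kernel L r lam G) (return (Mplus L) {#})
       \<and> strongly_aperiodic (Mplus L) (polling_kernel L r lam G)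
       \<and> (\<forall>n::nat. small_set (Mplus L) (polling_kernel L r lam G)
                     {\<zeta>\<in>space (Mplus L). size \<zeta> \<le> n})"
proof -
  interpret uniformly_descending_kernel "Mplus L" "polling_kernel L r lam G" size
      "descent_prob L r lam G" "{#}"
    using assms(1-6) by (rule polling_kernel_uniformly_descending)
  show ?thesis
    using phi_irreducible_return_bottom strongly_aperiodic small_sublevel by blast
qed

end
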